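(* Let $(B,k)$ be an instance of the orthogonal buttons and scissors problem. If $B$ contains more than $k^2$ light buttons, then $(B,k)$ is a no-instance.
   Context: An instance of the orthogonal buttons and scissors problem is a pair $(B,k)$ where $B$ is an $n\times m$ matrix with nonnegative integer entries and $k$ is a nonnegative integer. Cell $(i,j)$ contains a button of color $c$ if $B[i,j]=c>0$, and no button if $B[i,j]=0$. A cut is either a horizontal cut (a sequence of consecutive cells in one row) or a vertical cut (a sequence of consecutive cells in one column). Cuts are applied one after another; a cut is valid at the moment it is applied if, among the buttons still present, its first and last cells contain buttons and all buttons in its cells have the same color. Applying a cut deletes all buttons in its cells. $(B,k)$ is a yes-instance if some sequence of at most $k$ cuts, each valid when applied, removes all buttons of $B$, and a no-instance otherwise. A row or column of $B$ is heavy if it contains at least $k+1$ buttons and light otherwise. A button is heavy if it lies in some heavy row or heavy column, and light otherwise. *)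

theory Defs
  imports Main
begin

text \<open>A matrix B with n rows and m columns is modelled as a function
  B :: nat \<Rightarrow> nat \<Rightarrow> nat, where only the entries B i j with i < n and j < m matter.
  Cell (i,j) holds a button of colour B i j iff B i j > 0.\<close>

definition buttons :: "nat \<Rightarrow> nat \<Rightarrow> (nat \<Rightarrow> nat \<Rightarrow> nat) \<Rightarrow> (nat \<times> nat) set" where
  "buttons n m B = {(i, j). i < n \<and> j < m \<and> B i j > 0}"

datatype cut = HCut nat nat nat | VCut nat nat nat

fun cut_ok :: "nat \<Rightarrow> nat \<Rightarrow> cut \<Rightarrow> bool" where
  "cut_ok n m (HCut i a b) = (i < n \<and> a \<le> b \<and> b < m)"
| "cut_ok n m (VCut j a b) = (j < m \<and> a \<le> b \<and> b < n)"

fun cut_cells :: "cut \<Rightarrow> (nat \<times> nat) set" where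
  "cut_cells (HCut i a b) = {(i, j) | j. a \<le> j \<and> j \<le> b}"
| "cut_cells (VCut j a b) = {(i, j) | i. a \<le> i \<and> i \<le> b}"

fun cut_first :: "cut \<Rightarrow> nat \<times> nat" where
  "cut_first (HCut i a b) = (i, a)"
| "cut_first (VCut j a b) = (a, j)"

fun cut_last :: "cut \<Rightarrow> nat \<times> nat" where
  "cut_last (HCut i a b) = (i, b)"
| "cut_last (VCut j a b) = (b, j)"

definition valid_cut :: "nat \<Rightarrow> nat \<Rightarrow> (nat \<Rightarrow> nat \<Rightarrow> nat) \<Rightarrow> (nat \<times> nat) set \<Rightarrow> cut \<Rightarrow> bool" where
  "valid_cut n m B S c \<longleftrightarrow> cut_ok n m c \<and> cut_first c \<in> S \<and> cut_last c \<in> S \<and>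
     (\<forall>p \<in> cut_cells c \<inter> S. case_prod B p = case_prod B (cut_first c))"

fun apply_cuts :: "nat \<Rightarrow> nat \<Rightarrow> (nat \<Rightarrow> nat \<Rightarrow> nat) \<Rightarrow> (nat \<times> nat) set \<Rightarrow> cut list \<Rightarrow> (nat \<times> nat) set option" where
  "apply_cuts n m B S [] = Some S"
| "apply_cuts n m B S (c # cs) =
     (if valid_cut n m B S c then apply_cuts n m B (S - cut_cells c) cs else None)"

definition yes_instance :: "nat \<Rightarrow> nat \<Rightarrow> (nat \<Rightarrow> nat \<Rightarrow> nat) \<Rightarrow> nat \<Rightarrow> bool" where
  "yes_instance n m B k \<longleftrightarrow>
     (\<exists>cs. length cs \<le> k \<and> apply_cuts n m B (buttons n m B) cs = Some {})"

definition heavy_row :: "nat \<Rightarrow> nat \<Rightarrow> (nat \<Rightarrow> nat \<Rightarrow> nat) \<Rightarrow> nat \<Rightarrow> nat \<Rightarrow> bool" where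
  "heavy_row n m B k i \<longleftrightarrow> i < n \<and> card {j. j < m \<and> B i j > 0} \<ge> k + 1"

definition heavy_col :: "nat \<Rightarrow> nat \<Rightarrow> (nat \<Rightarrow> nat \<Rightarrow> nat) \<Rightarrow> nat \<Rightarrow> nat \<Rightarrow> bool" where
  "heavy_col n m B k j \<longleftrightarrow> j < m \<and> card {i. i < n \<and> B i j > 0} \<ge> k + 1"

definition light_buttons :: "nat \<Rightarrow> nat \<Rightarrow> (nat \<Rightarrow> nat \<Rightarrow> nat) \<Rightarrow> nat \<Rightarrow> (nat \<times> nat) set" where
  "light_buttons n m B k =
     {(i, j) \<in> buttons n m B. \<not> heavy_row n m B k i \<and> \<not> heavy_col n m B k j}"

end

theory Submission
  imports Defs
begin

text \<open>A cut lies in a single row or column, and a light button lies in a row and a column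
  holding at most k buttons; so each cut removes at most k light buttons, and k cuts
  cannot remove more than k * k of them.\<close>

lemma card_le_length_mul_if_covered:
  assumes cover: "X \<subseteq> (\<Union>x\<in>set xs. F x)"
    and bound: "\<And>x. x \<in> set xs \<Longrightarrow> card (X \<inter> F x) \<le> k"
  shows "card X \<le> length xs * k"
proof (cases "finite X")
  case True
  have "card X = card (\<Union>x\<in>set xs. X \<inter> F x)"
    using cover by (simp add: Int_UN_distrib[symmetric] Int_absorb2)
  also have "\<dots> \<le> (\<Sum>x\<in>set xs. card (X \<inter> F x))"
    by (rule card_UN_le) simp
  also have "\<dots> \<le> card (set xs) * k"
    using sum_mono[of "set xs", OF bound] by simp
  also have "\<dots> \<le> length xs * k"
    by (simp add: card_length)
  finally show ?thesis .
qed simp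

lemma apply_cuts_covers:
  "apply_cuts n m B S cs = Some R \<Longrightarrow> S \<subseteq> R \<union> (\<Union>c\<in>set cs. cut_cells c)"
proof (induction cs arbitrary: S)
  case (Cons c cs)
  then have "apply_cuts n m B (S - cut_cells c) cs = Some R"
    by (simp split: if_splits)
  from Cons.IH[OF this] show ?case by auto
qed simp

lemma yes_instance_covered_by_cuts:
  assumes "yes_instance n m B k"
  obtains cs where "length cs \<le> k" and "buttons n m B \<subseteq> (\<Union>c\<in>set cs. cut_cells c)"
  using assms apply_cuts_covers[of n m B "buttons n m B" _ "{}"]
  unfolding yes_instance_def by auto

lemma finite_buttons: "finite (buttons n m B)"
proof (rule finite_subset)
  show "buttons n m B \<subseteq> {..<n} \<times> {..<m}" by (auto simp: buttons_def)
qed simp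

lemma finite_light_buttons: "finite (light_buttons n m B k)"
  using finite_buttons by (rule finite_subset[rotated]) (auto simp: light_buttons_def)

lemma card_light_buttons_in_row: "card (light_buttons n m B k \<inter> {p. fst p = i}) \<le> k"
proof (cases "i < n \<and> \<not> heavy_row n m B k i")
  case True
  have "card (light_buttons n m B k \<inter> {p. fst p = i}) \<le> card (Pair i ` {j. j < m \<and> B i j > 0})"
    by (rule card_mono) (auto simp: light_buttons_def buttons_def)
  also have "\<dots> \<le> card {j. j < m \<and> B i j > 0}"
    by (rule card_image_le) simp
  also have "\<dots> \<le> k"
    using True by (auto simp: heavy_row_def)
  finally show ?thesis .
next
  case False
  then have "light_buttons n m B k \<inter> {p. fst p = i} = {}"
    by (auto simp: light_buttons_def buttons_def)
  then show ?thesis by simp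
qed

lemma card_light_buttons_in_col: "card (light_buttons n m B k \<inter> {p. snd p = j}) \<le> k"
proof (cases "j < m \<and> \<not> heavy_col n m B k j")
  case True
  have "card (light_buttons n m B k \<inter> {p. snd p = j}) \<le> card ((\<lambda>i. (i, j)) ` {i. i < n \<and> B i j > 0})"
    by (rule card_mono) (auto simp: light_buttons_def buttons_def)
  also have "\<dots> \<le> card {i. i < n \<and> B i j > 0}"
    by (rule card_image_le) simp
  also have "\<dots> \<le> k"
    using True by (auto simp: heavy_col_def)
  finally show ?thesis .
next
  case False
  then have "light_buttons n m B k \<inter> {p. snd p = j} = {}"
    by (auto simp: light_buttons_def buttons_def)
  then show ?thesis by simp
qed

lemma card_light_buttons_in_cut: "card (light_buttons n m B k \<inter> cut_cells c) \<le> k"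
proof (cases c)
  case (HCut i a b)
  have "card (light_buttons n m B k \<inter> cut_cells c) \<le> card (light_buttons n m B k \<inter> {p. fst p = i})"
    using HCut finite_light_buttons by (intro card_mono) auto
  then show ?thesis using card_light_buttons_in_row order_trans by blast
next
  case (VCut j a b)
  have "card (light_buttons n m B k \<inter> cut_cells c) \<le> card (light_buttons n m B k \<inter> {p. snd p = j})"
    using VCut finite_light_buttons by (intro card_mono) auto
  then show ?thesis using card_light_buttons_in_col order_trans by blast
qed

theorem mainTheorem3:
  fixes n m k :: nat and B :: "nat \<Rightarrow> nat \<Rightarrow> nat"
  assumes "card (light_buttons n m B k) > k ^ 2"
  shows "\<not> yes_instance n m B k"
proof
  assume "yes_instance n m B k"
  then obtain cs where len: "length cs \<le> k"
    and cover: "buttons n m B \<subseteq> (\<Union>c\<in>set cs. cut_cells c)"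
    by (rule yes_instance_covered_by_cuts)
  have "light_buttons n m B k \<subseteq> (\<Union>c\<in>set cs. cut_cells c)"
    using cover by (auto simp: light_buttons_def)
  then have "card (light_buttons n m B k) \<le> length cs * k"
    by (rule card_le_length_mul_if_covered) (rule card_light_buttons_in_cut)
  also have "\<dots> \<le> k ^ 2"
    using len by (simp add: power2_eq_square)
  finally show False using assms by simp
qed

end
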